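(* Let $X_1,\dots,X_n$ be (possibly dependent) component lifetimes identically distributed as $X$, let $\tau(\mathbf X)$ be the lifetime of a coherent system with these components and domination function $h$, i.e. $\bar F_{\tau(\mathbf X)}(x)=h(\bar F_X(x))$, and let $H(p)=ph'(p)/h(p)$, $p\in(0,1)$. For $t\ge0$, let $(\tau(\mathbf X))_t=(\tau(\mathbf X)-t\mid\tau(\mathbf X)>t)$, and let $\tau(\mathbf X_t)$ be the lifetime of the coherent system with the same structure built from the used components $(X_i)_t=(X_i-t\mid X_i>t)$, with reliability $\bar F_{\tau(\mathbf X_t)}(x)=h\big(\bar F_X(t+x)/\bar F_X(t)\big)$. If $(1-p)H'(p)/H(p)$ is decreasing and non-positive in $p\in(0,1)$, then for any fixed $t\ge0$, $\tau(\mathbf X_t)\underset{c}{\prec}(\tau(\mathbf X))_t$.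
   Context: All random variables are non-negative and absolutely continuous with support $[0,\infty)$. For a random variable $W$: density $f_W$, survival $\bar F_W$, hazard rate $r_W=f_W/\bar F_W$. $U\underset{c}{\prec}V$ means $r_U(x)/r_V(x)$ is increasing (non-decreasing) in $x\ge0$. The domination function $h:[0,1]\to[0,1]$ is increasing, continuous, $h(0)=0$, $h(1)=1$, assumed differentiable as needed. "Decreasing" means non-increasing; "negative" in the paper means non-positive. *)

theory Defs
  imports "HOL-Analysis.Analysis"
begin

definition hazard :: "(real \<Rightarrow> real) \<Rightarrow> real \<Rightarrow> real" where
  "hazard S x = - vector_derivative S (at x within {0..}) / S x"

definition c_order :: "(real \<Rightarrow> real) \<Rightarrow> (real \<Rightarrow> real) \<Rightarrow> bool" where
  "c_order SU SV \<longleftrightarrow> mono_on {0..} (\<lambda>x. hazard SU x / hazard SV x)"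

end

theory Submission
  imports Defs
begin

text \<open>Write \<open>q = F t\<close> and \<open>P x = F (t + x) / q\<close>. The hazard rates of the system with used
  components and of the residual system are \<open>h' (P x) f (t + x) / (q h (P x))\<close> and
  \<open>h' (q P x) f (t + x) / h (q P x)\<close>, so their quotient is \<open>R (P x)\<close> with
  \<open>R p = H p / H (q p)\<close>; since \<open>P\<close> decreases, it suffices that \<open>R\<close> decreases on \<open>(0, 1]\<close>.
  With \<open>\<phi> p = (1 - p) H' p / H p\<close>, the logarithmic derivative of \<open>R\<close> is
  \<open>\<phi> p / (1 - p) - q \<phi> (q p) / (1 - q p)\<close>, which is non-positive because \<open>\<phi> \<le> 0\<close>,
  \<open>q / (1 - q p) \<le> 1 / (1 - p)\<close> and \<open>\<phi> p \<le> \<phi> (q p)\<close>. At \<open>p = 1\<close>, where \<open>H\<close> need not be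
  differentiable, the mean value theorem bounds \<open>h' 1\<close> by the limit of the bounds
  \<open>h' p \<le> R a H (q p) h p / p\<close> valid for \<open>a < p < 1\<close>.\<close>

lemma at_within_Ici_nontrivial:
  fixes x a :: real
  assumes "a \<le> x"
  shows "at x within {a..} \<noteq> bot"
proof -
  have "x islimpt {x..x + 1}" by simp
  then have "x islimpt {a..}" by (rule islimpt_subset) (use assms in auto)
  then show ?thesis by (simp add: trivial_limit_within)
qed

lemma hazard_eq_deriv:
  assumes "x \<ge> 0" and "(S has_real_derivative D) (at x within {0..})"
  shows "hazard S x = - D / S x"
proof -
  have "vector_derivative S (at x within {0..}) = D"
    using assms by (intro vector_derivative_within at_within_Ici_nontrivial)
      (simp_all add: has_real_derivative_iff_has_vector_derivative)
  then show ?thesis by (simp add: hazard_def)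
qed

lemma hazard_comp_divide:
  fixes g h :: "real \<Rightarrow> real"
  assumes "x \<ge> 0" and g: "(g has_real_derivative g') (at x within {0..})"
    and h: "(h has_real_derivative D) (at (g x) within T)" and "g ` {0..} \<subseteq> T"
    and "c \<noteq> 0"
  shows "hazard (\<lambda>y. h (g y) / c) x = - D * g' / h (g x)"
proof -
  have "((h \<circ> g) has_real_derivative D * g') (at x within {0..})"
    by (rule DERIV_image_chain[OF has_field_derivative_subset[OF h] g]) (use assms in auto)
  then have "((\<lambda>y. h (g y) / c) has_real_derivative D * g' / c) (at x within {0..})"
    by (auto simp: o_def intro: DERIV_cdivide)
  then show ?thesis using assms by (simp add: hazard_eq_deriv)
qed

lemma mono_on_has_real_derivative_nonneg:
  fixes f :: "real \<Rightarrow> real"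
  assumes "mono_on S f" and "x \<in> S" and "(f has_real_derivative D) (at x within S)"
    and "at x within S \<noteq> bot"
  shows "0 \<le> D"
proof (rule tendsto_lowerbound)
  show "((\<lambda>y. (f y - f x) / (y - x)) \<longlongrightarrow> D) (at x within S)"
    using assms(3) by (simp add: has_field_derivative_iff)
  show "\<forall>\<^sub>F y in at x within S. 0 \<le> (f y - f x) / (y - x)"
    unfolding eventually_at_filter
  proof (intro always_eventually allI impI)
    fix y assume "y \<noteq> x" "y \<in> S"
    then show "0 \<le> (f y - f x) / (y - x)"
      using mono_onD[OF assms(1) _ assms(2), of y] mono_onD[OF assms(1) assms(2), of y]
      by (cases "y < x") (auto simp: zero_le_divide_iff)
  qed
qed fact

lemma DERIV_neg_imp_strict_antimono_on_Ici:
  fixes F F' :: "real \<Rightarrow> real"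
  assumes deriv: "\<And>x. x \<ge> a \<Longrightarrow> (F has_real_derivative F' x) (at x within {a..})"
    and neg: "\<And>x. x > a \<Longrightarrow> F' x < 0"
  shows "strict_antimono_on {a..} F"
proof (rule monotone_onI)
  fix x y assume "x \<in> {a..}" "y \<in> {a..}" "x < y"
  have cont: "continuous_on {a..} F"
    using deriv by (auto simp: continuous_on_eq_continuous_within intro: DERIV_continuous)
  show "F y < F x"
  proof (rule DERIV_neg_imp_decreasing_open[OF \<open>x < y\<close>])
    fix z assume "x < z" "z < y"
    with \<open>x \<in> {a..}\<close> have "at z within {a..} = at z"
      by (intro at_within_interior) auto
    with deriv[of z] neg[of z] \<open>x < z\<close> \<open>x \<in> {a..}\<close> show "\<exists>l. DERIV F z :> l \<and> l < 0"
      by auto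
  next
    show "continuous_on {x..y} F"
      by (rule continuous_on_subset[OF cont]) (use \<open>x \<in> {a..}\<close> in auto)
  qed
qed

lemma has_real_derivative_at_left_le:
  fixes f f' g :: "real \<Rightarrow> real"
  assumes "a < b" and cont: "continuous_on {a..b} f"
    and f': "\<And>z. a < z \<Longrightarrow> z < b \<Longrightarrow> (f has_real_derivative f' z) (at z)"
    and D: "(f has_real_derivative D) (at_left b)"
    and le: "\<And>z. a < z \<Longrightarrow> z < b \<Longrightarrow> f' z \<le> g z"
    and g: "(g \<longlongrightarrow> L) (at_left b)"
  shows "D \<le> L"
proof -
  have mvt: "\<exists>z. p < z \<and> z < b \<and> (f p - f b) / (p - b) = f' z" if "a < p" "p < b" for p
  proof -
    have "\<exists>l z. p < z \<and> z < b \<and> DERIV f z :> l \<and> f b - f p = (b - p) * l"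
    proof (rule MVT)
      show "continuous_on {p..b} f" by (rule continuous_on_subset[OF cont]) (use that in auto)
      fix w assume "p < w" "w < b"
      then show "f differentiable (at w)"
        using f'[of w] that by (auto simp: real_differentiable_def)
    qed (rule \<open>p < b\<close>)
    then obtain l z where z: "p < z" "z < b" and l: "DERIV f z :> l" "f b - f p = (b - p) * l"
      by blast
    have "l = f' z"
      using DERIV_unique[OF l(1) f'[of z]] that z by simp
    moreover have "(f p - f b) / (p - b) = l"
      using l(2) \<open>p < b\<close> by (simp add: field_simps)
    ultimately show ?thesis using z by (intro exI[of _ z]) simp
  qed
  define z where "z p = (SOME w. p < w \<and> w < b \<and> (f p - f b) / (p - b) = f' w)" for p
  have z: "p < z p \<and> z p < b \<and> (f p - f b) / (p - b) = f' (z p)" if "a < p" "p < b" for p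
    unfolding z_def by (rule someI_ex) (rule mvt[OF that])
  have near: "\<forall>\<^sub>F p in at_left b. a < p \<and> p < b"
    using eventually_at_left_real[OF \<open>a < b\<close>] by simp
  have "filterlim z (at_left b) (at_left b)"
    unfolding filterlim_at
  proof
    show "\<forall>\<^sub>F p in at_left b. z p \<in> {..<b} \<and> z p \<noteq> b"
      using near by eventually_elim (use z in force)
    show "(z \<longlongrightarrow> b) (at_left b)"
    proof (rule tendsto_sandwich[of "\<lambda>p. p" z _ "\<lambda>_. b"])
      show "\<forall>\<^sub>F p in at_left b. p \<le> z p" "\<forall>\<^sub>F p in at_left b. z p \<le> b"
        using near by (eventually_elim, use z in force)+
    qed (auto intro: tendsto_ident_at)
  qed
  then have "((\<lambda>p. g (z p)) \<longlongrightarrow> L) (at_left b)"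
    by (rule filterlim_compose[OF g])
  moreover have "((\<lambda>p. (f p - f b) / (p - b)) \<longlongrightarrow> D) (at_left b)"
    using D by (simp add: has_field_derivative_iff)
  moreover have "\<forall>\<^sub>F p in at_left b. (f p - f b) / (p - b) \<le> g (z p)"
    using near by eventually_elim (use z le in force)
  ultimately show ?thesis by (intro tendsto_le[of "at_left b"]) simp_all
qed

lemma domination_pos:
  fixes h h' H :: "real \<Rightarrow> real"
  assumes "mono_on {0..1} h" and "h 0 = 0" and "h 1 = 1"
    and H_def: "H = (\<lambda>p. p * h' p / h p)"
    and H_nz: "\<And>p. p \<in> {0<..<1} \<Longrightarrow> H p \<noteq> 0"
    and p: "p \<in> {0<..1}"
  shows "h p > 0"
proof (cases "p = 1")
  case False
  then have "h p \<noteq> 0" using H_nz[of p] p H_def by auto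
  moreover have "h 0 \<le> h p" using p by (intro mono_onD[OF assms(1)]) auto
  ultimately show ?thesis using \<open>h 0 = 0\<close> by simp
qed (use \<open>h 1 = 1\<close> in simp)

lemma domination_elasticity_pos:
  fixes h h' H :: "real \<Rightarrow> real"
  assumes "mono_on {0..1} h"
    and h_deriv: "\<And>p. p \<in> {0<..1} \<Longrightarrow> (h has_real_derivative h' p) (at p within {0..1})"
    and h_pos: "\<And>p. p \<in> {0<..1} \<Longrightarrow> h p > 0"
    and H_def: "H = (\<lambda>p. p * h' p / h p)"
    and H_nz: "\<And>p. p \<in> {0<..<1} \<Longrightarrow> H p \<noteq> 0"
    and p: "p \<in> {0<..<1}"
  shows "H p > 0"
proof -
  have "at p within {0..1} \<noteq> bot" using p by (simp add: trivial_limit_within)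
  then have "h' p \<ge> 0"
    using p h_deriv[of p] by (intro mono_on_has_real_derivative_nonneg[OF assms(1)]) auto
  then have "H p \<ge> 0" using p h_pos[of p] H_def by simp
  then show ?thesis using H_nz[OF p] by simp
qed

lemma dilation_log_derivative_le:
  fixes a b p q :: real
  assumes "0 < q" "q \<le> 1" "0 \<le> p" "p < 1"
    and le: "(1 - p) * a \<le> (1 - q * p) * b" and nonpos: "(1 - p) * a \<le> 0"
  shows "a \<le> q * b"
proof -
  have "q * p \<le> p" using assms by (simp add: mult_left_le_one_le)
  then have pos: "1 - q * p > 0" using \<open>p < 1\<close> by linarith
  have "q * (1 - p) \<le> 1 - q * p" using \<open>q \<le> 1\<close> by (simp add: algebra_simps)
  moreover have "a \<le> 0" using nonpos \<open>p < 1\<close> by (simp add: mult_le_0_iff)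
  ultimately have "(1 - q * p) * a \<le> q * (1 - p) * a"
    by (rule mult_right_mono_neg)
  also have "\<dots> \<le> q * ((1 - q * p) * b)" using le \<open>0 < q\<close> by (simp add: mult.assoc)
  finally have "(1 - q * p) * a \<le> (1 - q * p) * (q * b)" by (simp add: algebra_simps)
  then show ?thesis using pos by simp
qed

lemma antimono_on_dilation_ratio:
  fixes H H' :: "real \<Rightarrow> real" and q :: real
  assumes q: "0 < q" "q \<le> 1"
    and H_deriv: "\<And>p. p \<in> {0<..<1} \<Longrightarrow> (H has_real_derivative H' p) (at p)"
    and H_pos: "\<And>p. p \<in> {0<..<1} \<Longrightarrow> H p > 0"
    and dec: "antimono_on {0<..<1} (\<lambda>p. (1 - p) * H' p / H p)"
    and nonpos: "\<And>p. p \<in> {0<..<1} \<Longrightarrow> (1 - p) * H' p / H p \<le> 0"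
  shows "antimono_on {0<..<1} (\<lambda>p. H p / H (q * p))"
proof (rule monotone_onI)
  have qp: "q * p \<in> {0<..<1}" "q * p \<le> p" if "p \<in> {0<..<1}" for p
  proof -
    show "q * p \<le> p" using that q by (intro mult_left_le_one_le) auto
    moreover have "0 < q * p" "p < 1" using that q by auto
    ultimately show "q * p \<in> {0<..<1}" by simp
  qed
  fix r s :: real assume rs: "r \<in> {0<..<1}" "s \<in> {0<..<1}" "r \<le> s"
  show "H s / H (q * s) \<le> H r / H (q * r)"
  proof (rule deriv_nonpos_imp_antimono[OF _ _ \<open>r \<le> s\<close>])
    fix p assume "p \<in> {r..s}"
    then have p: "p \<in> {0<..<1}" using rs by auto
    have "((\<lambda>p. H (q * p)) has_real_derivative H' (q * p) * q) (at p)"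
      by (rule DERIV_chain2[of H _ "\<lambda>p. q * p", OF H_deriv[OF qp(1)[OF p]]])
        (auto intro!: derivative_eq_intros)
    then show "((\<lambda>p. H p / H (q * p)) has_real_derivative
        (H' p * H (q * p) - H p * (H' (q * p) * q)) / (H (q * p) * H (q * p))) (at p)"
      by (rule DERIV_divide[OF H_deriv[OF p]]) (use H_pos qp(1)[OF p] in force)
    have le: "(1 - p) * (H' p / H p) \<le> (1 - q * p) * (H' (q * p) / H (q * p))"
      using monotone_onD[OF dec qp(1)[OF p] p qp(2)[OF p]] by simp
    have "(1 - p) * (H' p / H p) \<le> 0" using nonpos[OF p] by simp
    then have "H' p / H p \<le> q * (H' (q * p) / H (q * p))"
      using p by (intro dilation_log_derivative_le[OF q _ _ le]) auto
    then have "H' p * H (q * p) \<le> H p * (H' (q * p) * q)"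
      using H_pos[OF p] H_pos[OF qp(1)[OF p]] by (simp add: field_simps)
    then show "(H' p * H (q * p) - H p * (H' (q * p) * q)) / (H (q * p) * H (q * p)) \<le> 0"
      by (simp add: divide_nonpos_nonneg)
  qed
qed

lemma antimono_on_dilation_ratio_upto_one:
  fixes h h' H H' :: "real \<Rightarrow> real" and q :: real
  assumes q: "0 < q" "q \<le> 1"
    and h_cont: "continuous_on {0..1} h" and h1: "h 1 = 1"
    and h_deriv: "\<And>p. p \<in> {0<..1} \<Longrightarrow> (h has_real_derivative h' p) (at p within {0..1})"
    and h_pos: "\<And>p. p \<in> {0<..1} \<Longrightarrow> h p > 0"
    and H_def: "H = (\<lambda>p. p * h' p / h p)"
    and H_deriv: "\<And>p. p \<in> {0<..<1} \<Longrightarrow> (H has_real_derivative H' p) (at p)"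
    and H_pos: "\<And>p. p \<in> {0<..<1} \<Longrightarrow> H p > 0"
    and dec: "antimono_on {0<..<1} (\<lambda>p. (1 - p) * H' p / H p)"
    and nonpos: "\<And>p. p \<in> {0<..<1} \<Longrightarrow> (1 - p) * H' p / H p \<le> 0"
  shows "antimono_on {0<..1} (\<lambda>p. H p / H (q * p))"
proof -
  let ?R = "\<lambda>p. H p / H (q * p)"
  have open_anti: "antimono_on {0<..<1} ?R"
    using q H_deriv H_pos dec nonpos by (rule antimono_on_dilation_ratio)
  have at_one: "?R 1 \<le> ?R a" if a: "0 < a" "a < 1" for a
  proof (cases "q = 1")
    case True
    then show ?thesis using H_pos[of a] a by (cases "H 1 = 0") auto
  next
    case False
    with q have q1: "q < 1" by simp
    have qp: "q * p \<in> {0<..<1}" if "0 < p" "p \<le> 1" for p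
    proof -
      have "q * p \<le> q" using that q by (intro mult_left_le) auto
      then have "q * p < 1" using q1 by linarith
      then show ?thesis using that q by simp
    qed
    define c where "c = ?R a"
    have bound: "h' p \<le> c * H (q * p) * h p / p" if p: "a < p" "p < 1" for p
    proof -
      have "?R p \<le> c" unfolding c_def using monotone_onD[OF open_anti] a p by auto
      then have "H p \<le> c * H (q * p)"
        using H_pos[OF qp] a p by (simp add: pos_divide_le_eq)
      moreover have "H p = p * h' p / h p" using H_def by simp
      ultimately have "p * h' p / h p \<le> c * H (q * p)" by simp
      then show ?thesis using h_pos[of p] a p by (simp add: field_simps)
    qed
    have lim: "((\<lambda>p. c * H (q * p) * h p / p) \<longlongrightarrow> c * H (q * 1) * h 1 / 1) (at_left 1)"
    proof (intro tendsto_intros)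
      have "isCont H q" using H_deriv q q1 by (auto intro: DERIV_isCont)
      then show "((\<lambda>p. H (q * p)) \<longlongrightarrow> H (q * 1)) (at_left 1)"
        by (intro isCont_tendsto_compose[of _ H] tendsto_intros) simp
      show "(h \<longlongrightarrow> h 1) (at_left 1)"
        using h_cont by (simp add: continuous_on_def flip: at_within_Icc_at_left[of 0 1])
    qed simp
    have h_at: "(h has_real_derivative h' p) (at p)" if "a < p" "p < 1" for p
      using h_deriv[of p] that a by (simp add: at_within_Icc_at)
    have h_left: "(h has_real_derivative h' 1) (at_left 1)"
      using h_deriv[of 1] by (simp add: at_within_Icc_at_left)
    have "continuous_on {a..1} h" by (rule continuous_on_subset[OF h_cont]) (use a in auto)
    then have "h' 1 \<le> c * H (q * 1) * h 1 / 1"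
      by (rule has_real_derivative_at_left_le[OF \<open>a < 1\<close> _ h_at h_left bound lim])
    moreover have "H 1 = h' 1" using H_def h1 by simp
    moreover have "H q > 0" using H_pos q q1 by simp
    ultimately show "?R 1 \<le> c" using h1 by (simp add: pos_divide_le_eq)
  qed
  show ?thesis
  proof (rule monotone_onI)
    fix r s :: real assume rs: "r \<in> {0<..1}" "s \<in> {0<..1}" "r \<le> s"
    show "?R s \<le> ?R r"
    proof (cases "s = 1")
      case True
      then show ?thesis using at_one[of r] rs by (cases "r = 1") auto
    next
      case False
      then show ?thesis using monotone_onD[OF open_anti] rs by auto
    qed
  qed
qed

lemma hazard_ratio_used_vs_residual:
  fixes h h' H F f :: "real \<Rightarrow> real" and t x :: real
  assumes h_deriv: "\<And>p. p \<in> {0<..1} \<Longrightarrow> (h has_real_derivative h' p) (at p within {0..1})"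
    and h_pos: "\<And>p. p \<in> {0<..1} \<Longrightarrow> h p > 0"
    and H_def: "H = (\<lambda>p. p * h' p / h p)"
    and F_deriv: "\<And>x. x \<ge> 0 \<Longrightarrow> (F has_real_derivative - f x) (at x within {0..})"
    and F_range: "\<And>y. y \<ge> 0 \<Longrightarrow> F (t + y) \<in> {0<..F t}" and "F t \<le> 1"
    and "t \<ge> 0" and "x \<ge> 0"
  shows "hazard (\<lambda>x. h (F (t + x) / F t)) x / hazard (\<lambda>x. h (F (t + x)) / h (F t)) x
    = (if f (t + x) = 0 then 0 else H (F (t + x) / F t) / H (F t * (F (t + x) / F t)))"
proof -
  have Ft: "F t > 0" using F_range[of 0] by simp
  have range: "(\<lambda>y. F (t + y)) ` {0..} \<subseteq> {0..1}" "(\<lambda>y. F (t + y) / F t) ` {0..} \<subseteq> {0..1}"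
    using F_range \<open>F t \<le> 1\<close> Ft by (force simp: field_simps)+
  have "(F \<circ> (\<lambda>y. t + y) has_real_derivative - f (t + x) * 1) (at x within {0..})"
  proof (rule DERIV_image_chain)
    show "(F has_real_derivative - f (t + x)) (at (t + x) within (\<lambda>y. t + y) ` {0..})"
      by (rule has_field_derivative_subset[OF F_deriv]) (use assms in auto)
  qed (auto intro!: derivative_eq_intros)
  then have g: "((\<lambda>y. F (t + y)) has_real_derivative - f (t + x)) (at x within {0..})"
    by (simp add: o_def)
  have P: "F (t + x) / F t \<in> {0<..1}" and Q: "F (t + x) \<in> {0<..1}"
    using F_range[OF \<open>x \<ge> 0\<close>] Ft \<open>F t \<le> 1\<close> by auto
  have "hazard (\<lambda>y. h (F (t + y) / F t) / 1) x
      = - h' (F (t + x) / F t) * (- f (t + x) / F t) / h (F (t + x) / F t)"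
    by (rule hazard_comp_divide[OF \<open>x \<ge> 0\<close> DERIV_cdivide[OF g] h_deriv[OF P] range(2)]) simp
  moreover have "hazard (\<lambda>y. h (F (t + y)) / h (F t)) x
      = - h' (F (t + x)) * - f (t + x) / h (F (t + x))"
    using h_pos[of "F t"] Ft \<open>F t \<le> 1\<close>
    by (intro hazard_comp_divide[OF \<open>x \<ge> 0\<close> g h_deriv[OF Q] range(1)]) auto
  ultimately show ?thesis
    using F_range[OF \<open>x \<ge> 0\<close>] Ft unfolding H_def
    by (cases "h' (F (t + x)) = 0") (auto simp: field_simps)
qed

lemma c_order_used_residual_if_antimono_dilation_ratio:
  fixes h h' H F f :: "real \<Rightarrow> real" and t :: real
  assumes h_deriv: "\<And>p. p \<in> {0<..1} \<Longrightarrow> (h has_real_derivative h' p) (at p within {0..1})"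
    and h_pos: "\<And>p. p \<in> {0<..1} \<Longrightarrow> h p > 0"
    and H_def: "H = (\<lambda>p. p * h' p / h p)"
    and H_pos: "\<And>p. p \<in> {0<..<1} \<Longrightarrow> H p > 0"
    and F_deriv: "\<And>x. x \<ge> 0 \<Longrightarrow> (F has_real_derivative - f x) (at x within {0..})"
    and f_pos: "\<And>x. x > 0 \<Longrightarrow> f x > 0"
    and F_anti: "strict_antimono_on {0..} F" and F_pos: "\<And>x. x \<ge> 0 \<Longrightarrow> F x > 0"
    and "F t \<le> 1" and "t \<ge> 0"
    and R_anti: "antimono_on {0<..1} (\<lambda>p. H p / H (F t * p))"
  shows "c_order (\<lambda>x. h (F (t + x) / F t)) (\<lambda>x. h (F (t + x)) / h (F t))"
  unfolding c_order_def
proof (rule mono_onI)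
  have F_range: "F (t + y) \<in> {0<..F t}" if "y \<ge> 0" for y
    using monotone_onD[OF F_anti, of t "t + y"] F_pos[of "t + y"] \<open>t \<ge> 0\<close> that
    by (cases "y = 0") auto
  have ratio: "hazard (\<lambda>x. h (F (t + x) / F t)) x / hazard (\<lambda>x. h (F (t + x)) / h (F t)) x
    = (if f (t + x) = 0 then 0 else H (F (t + x) / F t) / H (F t * (F (t + x) / F t)))"
    if "x \<ge> 0" for x
    using h_deriv h_pos H_def F_deriv F_range \<open>F t \<le> 1\<close> \<open>t \<ge> 0\<close> that
    by (rule hazard_ratio_used_vs_residual)
  fix x y :: real assume "x \<in> {0..}" "y \<in> {0..}" "x \<le> y"
  then have xy: "0 \<le> x" "0 \<le> y" "x \<le> y" by auto
  show "hazard (\<lambda>x. h (F (t + x) / F t)) x / hazard (\<lambda>x. h (F (t + x)) / h (F t)) x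
    \<le> hazard (\<lambda>x. h (F (t + x) / F t)) y / hazard (\<lambda>x. h (F (t + x)) / h (F t)) y"
  proof (cases "x = y")
    case False
    let ?P = "\<lambda>x. F (t + x) / F t"
    have "F (t + y) < F (t + x)" "0 < f (t + y)"
      using monotone_onD[OF F_anti, of "t + x" "t + y"] f_pos[of "t + y"] xy \<open>t \<ge> 0\<close> False
      by auto
    then have Py: "?P y \<in> {0<..<1}" "F t * ?P y \<in> {0<..<1}" and Px: "?P x \<in> {0<..1}"
      and "?P y \<le> ?P x"
      using F_range[of x] F_range[of y] xy \<open>F t \<le> 1\<close> by (auto simp: field_simps)
    have "0 < H (?P y) / H (F t * ?P y)" using H_pos[OF Py(1)] H_pos[OF Py(2)] by simp
    moreover have "H (?P x) / H (F t * ?P x) \<le> H (?P y) / H (F t * ?P y)"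
      using Py(1) by (intro monotone_onD[OF R_anti _ Px \<open>?P y \<le> ?P x\<close>]) auto
    ultimately show ?thesis
      unfolding ratio[OF xy(1)] ratio[OF xy(2)] using \<open>0 < f (t + y)\<close> by auto
  qed simp
qed

theorem proposition5p1:
  fixes h h' H H' :: "real \<Rightarrow> real"
    and F f :: "real \<Rightarrow> real"
    and t :: real
  assumes h_cont: "continuous_on {0..1} h"
    and h_mono: "mono_on {0..1} h"
    and h0: "h 0 = 0" and h1: "h 1 = 1"
    and h_deriv: "\<And>p. p \<in> {0<..1} \<Longrightarrow> (h has_real_derivative h' p) (at p within {0..1})"
    and H_def: "H = (\<lambda>p. p * h' p / h p)"
    and H_deriv: "\<And>p. p \<in> {0<..<1} \<Longrightarrow> (H has_real_derivative H' p) (at p)"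
    and H_nz: "\<And>p. p \<in> {0<..<1} \<Longrightarrow> H p \<noteq> 0"
    and cond_dec: "antimono_on {0<..<1} (\<lambda>p. (1 - p) * H' p / H p)"
    and cond_nonpos: "\<And>p. p \<in> {0<..<1} \<Longrightarrow> (1 - p) * H' p / H p \<le> 0"
    and F0: "F 0 = 1"
    and F_pos: "\<And>x. x \<ge> 0 \<Longrightarrow> F x > 0"
    and F_deriv: "\<And>x. x \<ge> 0 \<Longrightarrow> (F has_real_derivative - f x) (at x within {0..})"
    and f_pos: "\<And>x. x > 0 \<Longrightarrow> f x > 0"
    and F_lim: "(F \<longlongrightarrow> 0) at_top"
    and t_nonneg: "t \<ge> 0"
  shows "c_order (\<lambda>x. h (F (t + x) / F t)) (\<lambda>x. h (F (t + x)) / h (F t))"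
proof -
  have h_pos: "h p > 0" if "p \<in> {0<..1}" for p
    using h_mono h0 h1 H_def H_nz that by (rule domination_pos)
  have H_pos: "H p > 0" if "p \<in> {0<..<1}" for p
    using h_mono h_deriv h_pos H_def H_nz that by (rule domination_elasticity_pos)
  have F_anti: "strict_antimono_on {0..} F"
    using F_deriv f_pos by (intro DERIV_neg_imp_strict_antimono_on_Ici) auto
  have "F t \<le> F 0"
    using monotone_onD[OF F_anti, of 0 t] t_nonneg by (cases "t = 0") auto
  then have Ft: "0 < F t" "F t \<le> 1" using F0 F_pos t_nonneg by auto
  have "antimono_on {0<..1} (\<lambda>p. H p / H (F t * p))"
    using Ft h_cont h1 h_deriv h_pos H_def H_deriv H_pos cond_dec cond_nonpos
    by (rule antimono_on_dilation_ratio_upto_one)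
  with h_deriv h_pos H_def H_pos F_deriv f_pos F_anti F_pos Ft(2) t_nonneg show ?thesis
    by (rule c_order_used_residual_if_antimono_dilation_ratio)
qed

end
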